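(* For every integer $k\ge2$ and every item sequence $I\in(0,1]^n$, $NFD_k(I)\le\lambda_k\cdot OPT_k(I)+k$.
   Context: Define $\pi_1=2$, $\pi_{i+1}=\pi_i(\pi_i-1)+1$ for $i\ge1$, and $\lambda_j=\sum_{i=1}^j\max\{\frac{1}{\pi_i-1},\frac1j\}$ for $j\ge1$. The $k$-cardinality constrained bin packing problem: an item sequence $I\in(0,1]^n$ must be packed into bins of capacity $1$ with at most $k$ items per bin; $OPT_k(I)$ is the minimum number of non-empty bins, $ALG(I)$ the number used by $ALG$. Algorithm $NFD_k$: sort the items in non-increasing order, then process them in this order with a single open bin: pack the current item into the open bin if it fits (load stays $\le1$) and the bin contains fewer than $k$ items; otherwise close the open bin permanently and pack the item into a new bin. *)

theory Defs
  imports Complex_Main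
begin

(* pi_1 = 2, pi_{i+1} = pi_i (pi_i - 1) + 1; index 0 is unused *)
fun pi_seq :: "nat \<Rightarrow> nat" where
  "pi_seq 0 = 1"
| "pi_seq (Suc 0) = 2"
| "pi_seq (Suc (Suc i)) = pi_seq (Suc i) * (pi_seq (Suc i) - 1) + 1"

definition lambda_seq :: "nat \<Rightarrow> real" where
  "lambda_seq j = (\<Sum>i=1..j. max (1 / (real (pi_seq i) - 1)) (1 / real j))"

definition valid_packing :: "nat \<Rightarrow> real list \<Rightarrow> (nat \<Rightarrow> nat) \<Rightarrow> bool" where
  "valid_packing k I f \<longleftrightarrow>
     (\<forall>b. (\<Sum>i\<in>{i. i < length I \<and> f i = b}. I ! i) \<le> 1
          \<and> card {i. i < length I \<and> f i = b} \<le> k)"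

definition bins_used :: "real list \<Rightarrow> (nat \<Rightarrow> nat) \<Rightarrow> nat" where
  "bins_used I f = card (f ` {..<length I})"

definition OPT :: "nat \<Rightarrow> real list \<Rightarrow> nat" where
  "OPT k I = (LEAST m. \<exists>f. valid_packing k I f \<and> bins_used I f = m)"

(* Next Fit with a single open bin of current load and item count c;
   returns the number of additional bins opened *)
fun nf_aux :: "nat \<Rightarrow> real \<Rightarrow> nat \<Rightarrow> real list \<Rightarrow> nat" where
  "nf_aux k load c [] = 0"
| "nf_aux k load c (x # xs) =
     (if load + x \<le> 1 \<and> c < k then nf_aux k (load + x) (Suc c) xs
      else Suc (nf_aux k x 1 xs))"

definition NF :: "nat \<Rightarrow> real list \<Rightarrow> nat" where
  "NF k xs = (case xs of [] \<Rightarrow> 0 | x # ys \<Rightarrow> Suc (nf_aux k x 1 ys))"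

definition NFD :: "nat \<Rightarrow> real list \<Rightarrow> nat" where
  "NFD k I = NF k (rev (sort I))"

end

(*
  An item x of size in (1/(t+1), 1/t] gets the weight 1/min t k: the reciprocal of the number
  of such items that fit into one bin.  NFD packs the items class by class, where the class of
  x is min t k.  Every bin closed while all its items share one class f holds at least f of
  them and so has weight at least 1; every other closing raises the class of the open bin,
  which happens at most k times.  Hence NFD is at most the total weight plus k.

  Conversely, a bin with m items of total size at most 1/(pi_j - 1) has weight at most the
  sum of max (1/(pi_i - 1)) (1/k) over j <= i < j + m.  Either its largest item has class
  exactly pi_j - 1 < k and the rest has size below 1/(pi_j - 1) - 1/pi_j = 1/(pi_(j+1) - 1),
  which continues the induction; or every item of class below k has class at least pi_j, so
  one such item weighs at most 1/pi_j and several weigh at most (1 + 1/pi_j) times their size.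
  With j = 1 every bin of an optimal packing has weight at most lambda_k.
*)
theory Submission
  imports Defs "HOL-Library.Multiset"
begin

definition fit_count :: "real \<Rightarrow> nat" where
  "fit_count x = nat \<lfloor>1 / x\<rfloor>"

definition capped_fit_count :: "nat \<Rightarrow> real \<Rightarrow> nat" where
  "capped_fit_count k x = min (fit_count x) k"

definition weight :: "nat \<Rightarrow> real \<Rightarrow> real" where
  "weight k x = 1 / real (capped_fit_count k x)"

definition lambda_term :: "nat \<Rightarrow> nat \<Rightarrow> real" where
  "lambda_term k i = max (1 / (real (pi_seq i) - 1)) (1 / real k)"

lemma fit_count_pos: "0 < x \<Longrightarrow> x \<le> 1 \<Longrightarrow> 1 \<le> fit_count x"
  unfolding fit_count_def by (simp add: le_nat_floor)

lemma inverse_Suc_fit_count_less: "0 < x \<Longrightarrow> 1 / (real (fit_count x) + 1) < x"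
proof -
  assume "0 < x"
  moreover have "1 / x < real (fit_count x) + 1"
    unfolding fit_count_def by linarith
  ultimately show ?thesis by (simp add: field_simps)
qed

lemma le_inverse_fit_count: "0 < x \<Longrightarrow> real (fit_count x) \<le> 1 / x"
  unfolding fit_count_def by simp

lemma fit_count_antimono: "0 < y \<Longrightarrow> y \<le> x \<Longrightarrow> fit_count x \<le> fit_count y"
  unfolding fit_count_def by (intro nat_mono floor_mono) (simp add: frac_le)

lemma capped_fit_count_pos: "0 < x \<Longrightarrow> x \<le> 1 \<Longrightarrow> 1 \<le> k \<Longrightarrow> 1 \<le> capped_fit_count k x"
  unfolding capped_fit_count_def using fit_count_pos by simp

lemma capped_fit_count_le: "capped_fit_count k x \<le> k"
  unfolding capped_fit_count_def by simp

lemma capped_fit_count_antimono: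
  "0 < y \<Longrightarrow> y \<le> x \<Longrightarrow> capped_fit_count k x \<le> capped_fit_count k y"
  unfolding capped_fit_count_def using fit_count_antimono by (meson min.mono order_refl)

lemma le_weight: "0 < x \<Longrightarrow> x \<le> 1 \<Longrightarrow> 1 \<le> k \<Longrightarrow> x \<le> weight k x"
proof -
  assume x: "0 < x" "x \<le> 1" and "1 \<le> k"
  then have "1 \<le> capped_fit_count k x" by (rule capped_fit_count_pos)
  moreover have "real (capped_fit_count k x) \<le> 1 / x"
    unfolding capped_fit_count_def using le_inverse_fit_count[OF x(1)] by linarith
  ultimately show ?thesis unfolding weight_def using x(1) by (simp add: field_simps)
qed

lemma weight_capped: "k \<le> fit_count x \<Longrightarrow> weight k x = 1 / real k"
  unfolding weight_def capped_fit_count_def by simp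

lemma weight_uncapped: "fit_count x < k \<Longrightarrow> weight k x = 1 / real (fit_count x)"
  unfolding weight_def capped_fit_count_def by simp

lemma weight_uncapped_le:
  assumes "0 < x" "fit_count x < k" "2 \<le> p" "p \<le> real (fit_count x)"
  shows "weight k x \<le> 1 / p" and "weight k x \<le> (1 + 1 / p) * x"
proof -
  define t where "t = real (fit_count x)"
  have w: "weight k x = 1 / t"
    unfolding t_def using weight_uncapped[OF assms(2)] .
  show "weight k x \<le> 1 / p"
    unfolding w using assms(3,4) t_def by (simp add: frac_le)
  have "1 / t = (1 + 1 / t) * (1 / (t + 1))"
    using assms(3,4) t_def by (simp add: field_simps)
  also have "\<dots> \<le> (1 + 1 / t) * x"
    using inverse_Suc_fit_count_less[OF assms(1)] assms(3,4) t_def by (intro mult_left_mono) auto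
  also have "\<dots> \<le> (1 + 1 / p) * x"
    using assms t_def by (intro mult_right_mono) (auto simp: frac_le)
  finally show "weight k x \<le> (1 + 1 / p) * x" unfolding w .
qed

lemma pi_seq_ge_2: "1 \<le> j \<Longrightarrow> 2 \<le> pi_seq j"
proof (induction j rule: pi_seq.induct)
  case (3 i)
  then have "2 \<le> pi_seq (Suc i)" by simp
  then have "2 * 1 \<le> pi_seq (Suc i) * (pi_seq (Suc i) - 1)" by (intro mult_mono) auto
  then show ?case unfolding pi_seq.simps(3) by linarith
qed auto

lemma pi_seq_Suc_minus_1:
  assumes "1 \<le> j"
  shows "real (pi_seq (Suc j)) - 1 = real (pi_seq j) * (real (pi_seq j) - 1)"
proof -
  obtain i where i: "j = Suc i" using assms by (cases j) auto
  have "real (pi_seq j - 1) = real (pi_seq j) - 1"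
    using pi_seq_ge_2[OF assms] by (simp add: of_nat_diff)
  then show ?thesis using i by simp
qed

lemma inverse_pi_seq_Suc_minus_1:
  assumes "1 \<le> j"
  shows "1 / (real (pi_seq (Suc j)) - 1) = 1 / (real (pi_seq j) - 1) - 1 / real (pi_seq j)"
  using pi_seq_Suc_minus_1[OF assms] pi_seq_ge_2[OF assms] by (simp add: field_simps)

lemma lambda_term_ge: "1 / real k \<le> lambda_term k i"
  unfolding lambda_term_def by simp

lemma sum_lambda_term_split:
  assumes "r \<le> m"
  shows "(\<Sum>i=j..<j+r. lambda_term k i) + real (m - r) / real k \<le> (\<Sum>i=j..<j+m. lambda_term k i)"
proof -
  have "real (m - r) / real k = (\<Sum>i=j+r..<j+m. 1 / real k)"
    using assms by simp
  also have "\<dots> \<le> (\<Sum>i=j+r..<j+m. lambda_term k i)"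
    by (intro sum_mono lambda_term_ge)
  finally show ?thesis
    using sum.atLeastLessThan_concat[of j "j+r" "j+m" "lambda_term k"] assms by simp
qed

lemma sum_weight_uncapped_le_lambda_terms:
  fixes x :: "'a \<Rightarrow> real"
  assumes B: "finite B" "\<forall>i\<in>B. 0 < x i" "sum x B \<le> 1 / (real (pi_seq j) - 1)"
    and j: "1 \<le> j"
    and uncapped: "\<forall>i\<in>B. fit_count (x i) < k \<and> pi_seq j \<le> fit_count (x i)"
  shows "(\<Sum>i\<in>B. weight k (x i)) \<le> (\<Sum>i=j..<j + min (card B) 2. lambda_term k i)"
proof -
  define p where "p = real (pi_seq j)"
  have p2: "2 \<le> p"
    unfolding p_def using pi_seq_ge_2[OF j] by simp
  have w_le: "weight k (x i) \<le> 1 / p" "weight k (x i) \<le> (1 + 1 / p) * x i" if "i \<in> B" for i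
    using weight_uncapped_le[of "x i" k p] that uncapped B(2) p2 unfolding p_def by auto
  consider "card B = 0" | "card B = 1" | "2 \<le> card B" by linarith
  then show ?thesis
  proof cases
    case 1
    then show ?thesis using B(1) by simp
  next
    case 2
    then obtain b where "B = {b}" by (metis card_1_singletonE)
    then have "(\<Sum>i\<in>B. weight k (x i)) \<le> 1 / p" using w_le by simp
    also have "\<dots> \<le> 1 / (p - 1)" using p2 by (intro divide_left_mono) auto
    also have "\<dots> \<le> lambda_term k j" unfolding lambda_term_def p_def by simp
    finally show ?thesis using 2 by simp
  next
    case 3
    have "(\<Sum>i\<in>B. weight k (x i)) \<le> (\<Sum>i\<in>B. (1 + 1 / p) * x i)"
      using w_le by (intro sum_mono) auto
    also have "\<dots> \<le> (1 + 1 / p) * (1 / (p - 1))"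
      unfolding sum_distrib_left[symmetric] using B(3) p2 unfolding p_def
      by (intro mult_left_mono) auto
    also have "\<dots> = 1 / (p - 1) + (1 / (p - 1) - 1 / p)"
      using p2 by (simp add: divide_simps)
    also have "\<dots> = 1 / (p - 1) + 1 / (real (pi_seq (Suc j)) - 1)"
      unfolding p_def using inverse_pi_seq_Suc_minus_1[OF j] by simp
    also have "\<dots> \<le> lambda_term k j + lambda_term k (Suc j)"
      unfolding lambda_term_def p_def by (intro add_mono) auto
    finally show ?thesis using 3 by (simp add: numeral_2_eq_2)
  qed
qed

lemma sum_weight_le_lambda_terms_large_items:
  fixes x :: "'a \<Rightarrow> real"
  assumes S: "finite S" "\<forall>i\<in>S. 0 < x i" "sum x S \<le> 1 / (real (pi_seq j) - 1)"
    and j: "1 \<le> j"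
    and large: "\<forall>i\<in>S. fit_count (x i) < k \<longrightarrow> pi_seq j \<le> fit_count (x i)"
  shows "(\<Sum>i\<in>S. weight k (x i)) \<le> (\<Sum>i=j..<j + card S. lambda_term k i)"
proof -
  define B where "B = {i\<in>S. fit_count (x i) < k}"
  define r where "r = min (card B) 2"
  have BS: "B \<subseteq> S" and finB: "finite B"
    unfolding B_def using S(1) by auto
  have "sum x B \<le> sum x S"
    using sum_mono2[OF S(1) BS, of x] S(2) by (auto simp: less_imp_le)
  then have "(\<Sum>i\<in>B. weight k (x i)) \<le> (\<Sum>i=j..<j+r. lambda_term k i)"
    unfolding r_def using S large j BS
    by (intro sum_weight_uncapped_le_lambda_terms finB) (auto simp: B_def)
  moreover have "(\<Sum>i\<in>S-B. weight k (x i)) = (\<Sum>i\<in>S-B. 1 / real k)"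
    unfolding B_def by (intro sum.cong) (auto simp: weight_capped)
  ultimately have "(\<Sum>i\<in>S. weight k (x i)) \<le> (\<Sum>i=j..<j+r. lambda_term k i) + real (card (S - B)) / real k"
    using sum.subset_diff[OF BS S(1), of "\<lambda>i. weight k (x i)"] by simp
  also have "\<dots> \<le> (\<Sum>i=j..<j+r. lambda_term k i) + real (card S - r) / real k"
    using card_Diff_subset[OF finB BS] unfolding r_def by (simp add: divide_right_mono)
  also have "\<dots> \<le> (\<Sum>i=j..<j + card S. lambda_term k i)"
    using card_mono[OF S(1) BS] unfolding r_def by (intro sum_lambda_term_split) simp
  finally show ?thesis .
qed

lemma pi_seq_le_Suc_fit_count:
  assumes "0 < x" "x \<le> 1 / (real (pi_seq j) - 1)" "1 \<le> j"
  shows "pi_seq j \<le> fit_count x + 1"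
proof -
  have "1 / (real (fit_count x) + 1) < 1 / (real (pi_seq j) - 1)"
    using inverse_Suc_fit_count_less[OF assms(1)] assms(2) by linarith
  then have "real (pi_seq j) - 1 < real (fit_count x) + 1"
    using pi_seq_ge_2[OF assms(3)] by (simp add: field_simps)
  then show ?thesis by linarith
qed

lemma remainder_le_inverse_pi_seq_Suc_minus_1:
  assumes "0 < x" "fit_count x + 1 = pi_seq j" "1 \<le> j" "x + s \<le> 1 / (real (pi_seq j) - 1)"
  shows "s \<le> 1 / (real (pi_seq (Suc j)) - 1)"
proof -
  have "1 / real (pi_seq j) < x"
    using inverse_Suc_fit_count_less[OF assms(1)] assms(2) by (metis of_nat_1 of_nat_add)
  then show ?thesis
    using assms(4) inverse_pi_seq_Suc_minus_1[OF assms(3)] by linarith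
qed

lemma sum_weight_le_lambda_terms:
  fixes x :: "'a \<Rightarrow> real"
  assumes "finite S" "\<forall>i\<in>S. 0 < x i" "sum x S \<le> 1 / (real (pi_seq j) - 1)" "1 \<le> j"
  shows "(\<Sum>i\<in>S. weight k (x i)) \<le> (\<Sum>i=j..<j + card S. lambda_term k i)"
  using assms
proof (induction S arbitrary: j rule: finite_ranking_induct[where f = x])
  case empty
  then show ?case by simp
next
  case (insert a S)
  show ?case
  proof (cases "a \<in> S")
    case True
    then show ?thesis using insert by (simp add: insert_absorb)
  next
    case a_new: False
    have pos: "0 < x a" "\<forall>i\<in>S. 0 < x i"
      using insert.prems(1) by auto
    have size: "x a + sum x S \<le> 1 / (real (pi_seq j) - 1)"
      using insert.prems(2) insert.hyps(1) a_new by simp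
    then have fit_a: "pi_seq j \<le> fit_count (x a) + 1"
      using pi_seq_le_Suc_fit_count[OF pos(1) _ insert.prems(3)] sum_nonneg[of S x] pos(2)
      by (smt (verit) less_imp_le)
    show ?thesis
    proof (cases "fit_count (x a) < k \<and> fit_count (x a) + 1 = pi_seq j")
      case True
      then have "weight k (x a) \<le> lambda_term k j"
        unfolding lambda_term_def using weight_uncapped[of "x a" k]
        by (metis add_diff_cancel_right' max.cobounded1 of_nat_1 of_nat_add)
      moreover have "(\<Sum>i\<in>S. weight k (x i)) \<le> (\<Sum>i=Suc j..<Suc j + card S. lambda_term k i)"
        using remainder_le_inverse_pi_seq_Suc_minus_1[OF pos(1) _ insert.prems(3) size] True
        by (intro insert.IH) (use pos(2) in auto)
      moreover have "(\<Sum>i=j..<j + card (insert a S). lambda_term k i)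
          = lambda_term k j + (\<Sum>i=Suc j..<Suc j + card S. lambda_term k i)"
        using insert.hyps(1) a_new by (simp add: sum.atLeast_Suc_lessThan del: sum.op_ivl_Suc)
      ultimately show ?thesis
        using insert.hyps(1) a_new by simp
    next
      case False
      have "pi_seq j \<le> fit_count (x i)" if "i \<in> insert a S" "fit_count (x i) < k" for i
      proof -
        have "fit_count (x a) \<le> fit_count (x i)"
          using that(1) insert.hyps(2) insert.prems(1) by (auto intro: fit_count_antimono)
        then show ?thesis
          using False fit_a that(2) by linarith
      qed
      then show ?thesis
        using insert.hyps(1) insert.prems
        by (intro sum_weight_le_lambda_terms_large_items) auto
    qed
  qed
qed

lemma sum_weight_le_lambda_seq:
  fixes x :: "'a \<Rightarrow> real"
  assumes "finite S" "\<forall>i\<in>S. 0 < x i" "sum x S \<le> 1" "card S \<le> k"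
  shows "(\<Sum>i\<in>S. weight k (x i)) \<le> lambda_seq k"
proof -
  have "(\<Sum>i\<in>S. weight k (x i)) \<le> (\<Sum>i=1..<1 + card S. lambda_term k i)"
    using sum_weight_le_lambda_terms[of S x 1 k] assms by simp
  also have "\<dots> \<le> (\<Sum>i=1..<1 + k. lambda_term k i)"
    using sum_lambda_term_split[OF assms(4), where j = 1 and k = k]
    by (smt (verit) divide_nonneg_nonneg of_nat_0_le_iff)
  also have "\<dots> = lambda_seq k"
    unfolding lambda_seq_def lambda_term_def by (simp add: atLeastLessThanSuc_atLeastAtMost)
  finally show ?thesis .
qed

lemma sum_weight_le_lambda_seq_bins_used:
  assumes "valid_packing k I f" "\<forall>x\<in>set I. 0 < x"
  shows "sum_list (map (weight k) I) \<le> lambda_seq k * real (bins_used I f)"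
proof -
  define bin where "bin b = {i \<in> {..<length I}. f i = b}" for b
  have "sum_list (map (weight k) I) = (\<Sum>i<length I. weight k (I ! i))"
    by (simp add: sum_list_sum_nth atLeast0LessThan)
  also have "\<dots> = (\<Sum>b\<in>f ` {..<length I}. \<Sum>i\<in>bin b. weight k (I ! i))"
    unfolding bin_def by (rule sum.image_gen) simp
  also have "\<dots> \<le> (\<Sum>b\<in>f ` {..<length I}. lambda_seq k)"
  proof (intro sum_mono sum_weight_le_lambda_seq)
    fix b
    show "finite (bin b)" "\<forall>i\<in>bin b. 0 < I ! i"
      unfolding bin_def using assms(2) by auto
    show "sum ((!) I) (bin b) \<le> 1" "card (bin b) \<le> k"
      using assms(1) unfolding valid_packing_def bin_def lessThan_iff by auto
  qed
  also have "\<dots> = lambda_seq k * real (bins_used I f)"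
    unfolding bins_used_def by simp
  finally show ?thesis .
qed

lemma valid_packing_id:
  assumes "1 \<le> k" "\<forall>x\<in>set I. x \<le> 1"
  shows "valid_packing k I id"
  unfolding valid_packing_def
proof
  fix b
  have "{i. i < length I \<and> id i = b} = (if b < length I then {b} else {})"
    by auto
  then show "(\<Sum>i\<in>{i. i < length I \<and> id i = b}. I ! i) \<le> 1 \<and> card {i. i < length I \<and> id i = b} \<le> k"
    using assms by simp
qed

lemma OPT_attained:
  assumes "1 \<le> k" "\<forall>x\<in>set I. x \<le> 1"
  shows "\<exists>f. valid_packing k I f \<and> bins_used I f = OPT k I"
  unfolding OPT_def by (rule LeastI_ex) (use valid_packing_id[OF assms] in blast)

lemma closing_bin_paid:
  assumes closed: "\<not> (load + y \<le> 1 \<and> c < k)"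
    and "1 \<le> f" "f \<le> g" "g \<le> k" "y \<le> 1 / real g"
    and bin: "if pure then load \<le> real c / real f else f < g"
  shows "1 + real f - real g \<le> (if pure then real c / real f else 0)"
proof (cases "pure \<and> g = f")
  case True
  have "f \<le> c"
  proof (cases "c < k")
    case c: True
    have "1 < real c / real f + 1 / real f"
      using closed c bin True assms(5) by auto
    then have "real f < real c + 1"
      using assms(2) by (simp add: field_simps)
    then show ?thesis by linarith
  qed (use True assms(4) in linarith)
  then show ?thesis
    using True assms(2) by simp
next
  case False
  then have "f < g"
    using bin assms(3) by (auto split: if_splits)
  then have "1 + real f - real g \<le> 0"
    by simp
  moreover have "0 \<le> (if pure then real c / real f else 0)"
    by simp
  ultimately show ?thesis
    by linarith
qed

lemma adding_item_to_bin:
  assumes "1 \<le> f" "f \<le> g" "y \<le> 1 / real g"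
    and bin: "if pure then load \<le> real c / real f else f < g"
  shows "if pure \<and> g = f then load + y \<le> real (Suc c) / real f else f < g"
    and "(if pure \<and> g = f then real (Suc c) / real f else 0)
      \<le> (if pure then real c / real f else 0) + 1 / real g"
proof -
  have split: "real (Suc c) / real f = real c / real f + 1 / real f"
    by (simp add: add_divide_distrib)
  show "if pure \<and> g = f then load + y \<le> real (Suc c) / real f else f < g"
    using bin assms(2,3) unfolding split by (auto split: if_splits)
  show "(if pure \<and> g = f then real (Suc c) / real f else 0)
      \<le> (if pure then real c / real f else 0) + 1 / real g"
    unfolding split by simp
qed

(* f is the class of the first item of the open bin, which holds c items and has load load;
   the bin is pure if all its items have class f, and then its weight is c / f. *)
lemma nf_aux_le_sum_weight:
  assumes "sorted_wrt (\<ge>) xs" "\<forall>y\<in>set xs. 0 < y \<and> y \<le> 1" "1 \<le> f" "f \<le> k"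
    "\<forall>y\<in>set xs. f \<le> capped_fit_count k y"
    "if pure then load \<le> real c / real f else (\<forall>y\<in>set xs. f < capped_fit_count k y)"
  shows "real (nf_aux k load c xs)
    \<le> (if pure then real c / real f else 0) + sum_list (map (weight k) xs) + real k - real f"
  using assms
proof (induction xs arbitrary: load c f pure)
  case Nil
  have "0 \<le> (if pure then real c / real f else 0)"
    by simp
  then show ?case
    using Nil.prems(4) by simp
next
  case (Cons y ys)
  define g where "g = capped_fit_count k y"
  have y: "0 < y" "y \<le> 1" and "f \<le> g"
    using Cons.prems(2,5) unfolding g_def by auto
  have g: "1 \<le> g" "g \<le> k" "weight k y = 1 / real g"
    using capped_fit_count_pos[OF y] capped_fit_count_le Cons.prems(3,4)
    unfolding g_def weight_def by auto
  have y_le: "y \<le> 1 / real g"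
    using le_weight[OF y, of k] g by simp
  have ys: "sorted_wrt (\<ge>) ys" "\<forall>z\<in>set ys. 0 < z \<and> z \<le> 1" "\<forall>z\<in>set ys. g \<le> capped_fit_count k z"
    using Cons.prems(1,2) unfolding g_def by (auto intro: capped_fit_count_antimono)
  have bin: "if pure then load \<le> real c / real f else f < g"
    using Cons.prems(6) unfolding g_def by (auto split: if_splits)
  show ?case
  proof (cases "load + y \<le> 1 \<and> c < k")
    case fits: True
    have "if pure \<and> g = f then load + y \<le> real (Suc c) / real f
        else \<forall>z\<in>set ys. f < capped_fit_count k z"
      using adding_item_to_bin(1)[OF Cons.prems(3) \<open>f \<le> g\<close> y_le bin] ys(3) by (auto split: if_splits)
    then have "real (nf_aux k (load + y) (Suc c) ys)
        \<le> (if pure \<and> g = f then real (Suc c) / real f else 0) + sum_list (map (weight k) ys) + real k - real f"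
      using Cons.IH[OF ys(1,2) Cons.prems(3,4)] ys(3) \<open>f \<le> g\<close> by force
    then show ?thesis
      using fits adding_item_to_bin(2)[OF Cons.prems(3) \<open>f \<le> g\<close> y_le bin] g(3) by simp
  next
    case closed: False
    have IH: "real (nf_aux k y 1 ys) \<le> 1 / real g + sum_list (map (weight k) ys) + real k - real g"
      using Cons.IH[OF ys(1,2) g(1,2), where c = 1 and pure = True and load = y] ys(3) y_le by simp
    have "1 + real f - real g \<le> (if pure then real c / real f else 0)"
      using closing_bin_paid[OF closed Cons.prems(3) \<open>f \<le> g\<close> g(2) y_le bin] .
    moreover have "nf_aux k load c (y # ys) = Suc (nf_aux k y 1 ys)"
      using closed by auto
    ultimately show ?thesis
      using IH g(3) by simp
  qed
qed

lemma NF_le_sum_weight: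
  assumes "1 \<le> k" "sorted_wrt (\<ge>) xs" "\<forall>y\<in>set xs. 0 < y \<and> y \<le> 1"
  shows "real (NF k xs) \<le> sum_list (map (weight k) xs) + real k"
proof (cases xs)
  case Nil
  then show ?thesis by (simp add: NF_def)
next
  case (Cons x ys)
  define f where "f = capped_fit_count k x"
  have x: "0 < x" "x \<le> 1"
    using assms(3) Cons by auto
  have f: "1 \<le> f" "f \<le> k" "weight k x = 1 / real f"
    using capped_fit_count_pos[OF x assms(1)] capped_fit_count_le
    unfolding f_def weight_def by auto
  have "real (nf_aux k x 1 ys) \<le> 1 / real f + sum_list (map (weight k) ys) + real k - real f"
    using nf_aux_le_sum_weight[OF _ _ f(1,2), where xs = ys and pure = True and load = x and c = 1]
      assms(2,3) Cons le_weight[OF x assms(1)] f(3)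
    by (auto simp: f_def intro: capped_fit_count_antimono)
  then show ?thesis
    using Cons f by (simp add: NF_def)
qed

lemma NFD_le_sum_weight:
  assumes "1 \<le> k" "\<forall>x\<in>set I. 0 < x \<and> x \<le> 1"
  shows "real (NFD k I) \<le> sum_list (map (weight k) I) + real k"
proof -
  have "sum_list (map (weight k) (rev (sort I))) = sum_list (map (weight k) I)"
    by (metis mset_map mset_rev mset_sort sum_mset_sum_list)
  then show ?thesis
    using NF_le_sum_weight[OF assms(1), of "rev (sort I)"] assms(2)
    unfolding NFD_def by (simp add: sorted_wrt_rev)
qed

theorem theorem11:
  fixes k :: nat and I :: "real list"
  assumes "k \<ge> 2"
    and "\<forall>x\<in>set I. 0 < x \<and> x \<le> 1"
  shows "real (NFD k I) \<le> lambda_seq k * real (OPT k I) + real k"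
proof -
  have k: "1 \<le> k"
    using assms(1) by simp
  obtain f where f: "valid_packing k I f" "bins_used I f = OPT k I"
    using OPT_attained[OF k] assms(2) by blast
  have "real (NFD k I) \<le> sum_list (map (weight k) I) + real k"
    using NFD_le_sum_weight[OF k assms(2)] .
  also have "\<dots> \<le> lambda_seq k * real (OPT k I) + real k"
    using sum_weight_le_lambda_seq_bins_used[OF f(1)] assms(2) f(2) by simp
  finally show ?thesis .
qed

end
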